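(* Let $T$ be a tree with $n\ge 2$ vertices and let $(u,v)$ be an edge of $T$. Then $$\frac{F(T_v)}{F(T_u)}=\frac{|T_u(v)|}{|T_v(u)|}=\frac{|T_u(v)|}{n-|T_u(v)|}.$$
   Context: For a finite undirected graph $G=(V,E)$, a shelling of $G$ is a total ordering $\sigma(1),\ldots,\sigma(|E|)$ of $E$ such that for every $k$ the edges $\sigma(1),\ldots,\sigma(k)$ form a connected subgraph. For a tree $T$ and a vertex $v$, $T_v$ denotes $T$ rooted at $v$, and a shelling of $T_v$ is a shelling $\sigma$ of $T$ whose first edge $\sigma(1)$ is incident to $v$; $F(T_v)$ is the number of shellings of $T_v$. In $T_v$, a vertex $w$ is a descendant of $u$ if $u$ lies on the unique path from $v$ to $w$ (including $w=u$). $T_v(u)$ is the subtree of $T$ induced by all descendants of $u$ in $T_v$, and $|T_v(u)|$ is its number of vertices. *)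

theory Defs
  imports Complex_Main
begin

definition graph :: "'a set \<Rightarrow> 'a set set \<Rightarrow> bool" where
  "graph V E \<longleftrightarrow> finite V \<and> (\<forall>e\<in>E. \<exists>x y. x \<noteq> y \<and> e = {x, y} \<and> x \<in> V \<and> y \<in> V)"

definition adj :: "'a set set \<Rightarrow> 'a \<Rightarrow> 'a \<Rightarrow> bool" where
  "adj E x y \<longleftrightarrow> x \<noteq> y \<and> {x, y} \<in> E"

definition connected_graph :: "'a set \<Rightarrow> 'a set set \<Rightarrow> bool" where
  "connected_graph V E \<longleftrightarrow> V \<noteq> {} \<and> (\<forall>x\<in>V. \<forall>y\<in>V. (adj E)\<^sup>*\<^sup>* x y)"

definition is_path :: "'a set set \<Rightarrow> 'a list \<Rightarrow> bool" where
  "is_path E p \<longleftrightarrow> p \<noteq> [] \<and> distinct p \<and> (\<forall>i. Suc i < length p \<longrightarrow> adj E (p ! i) (p ! Suc i))"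

definition has_cycle :: "'a set set \<Rightarrow> bool" where
  "has_cycle E \<longleftrightarrow> (\<exists>p. is_path E p \<and> length p \<ge> 3 \<and> adj E (last p) (hd p))"

definition tree :: "'a set \<Rightarrow> 'a set set \<Rightarrow> bool" where
  "tree V E \<longleftrightarrow> graph V E \<and> connected_graph V E \<and> \<not> has_cycle E"

definition is_shelling :: "'a set set \<Rightarrow> 'a set list \<Rightarrow> bool" where
  "is_shelling E s \<longleftrightarrow> distinct s \<and> set s = E \<and>
     (\<forall>k. 1 \<le> k \<and> k \<le> length s \<longrightarrow>
        connected_graph (\<Union> (set (take k s))) (set (take k s)))"

text \<open>Shellings of the rooted tree T_v: first edge incident to v.\<close>
definition rooted_shellings :: "'a set set \<Rightarrow> 'a \<Rightarrow> 'a set list set" where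
  "rooted_shellings E v = {s. is_shelling E s \<and> s \<noteq> [] \<and> v \<in> hd s}"

definition F :: "'a set set \<Rightarrow> 'a \<Rightarrow> nat" where
  "F E v = card (rooted_shellings E v)"

definition descendants :: "'a set \<Rightarrow> 'a set set \<Rightarrow> 'a \<Rightarrow> 'a \<Rightarrow> 'a set" where
  "descendants V E v u = {w \<in> V. \<exists>p. is_path E p \<and> hd p = v \<and> last p = w \<and> u \<in> set p}"

text \<open>|T_v(u)|: number of vertices of the subtree induced by the descendants of u.\<close>
definition subtree_size :: "'a set \<Rightarrow> 'a set set \<Rightarrow> 'a \<Rightarrow> 'a \<Rightarrow> nat" where
  "subtree_size V E v u = card (descendants V E v u)"

end

(*
  Deleting the edge {u, v} splits T into the branch A of u (a edges, a + 1 vertices) and the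
  branch B of v (b edges, b + 1 vertices), and n = a + b + 2.  A shelling of T_v is precisely an
  interleaving of a shelling of B rooted at v with a sequence that starts with {u, v} and then
  shells A from u: the two sides meet only in v, so neither constrains the other.  Hence
  F(T_v) = F_A F_B C(a + b + 1, a + 1) and symmetrically F(T_u) = F_A F_B C(a + b + 1, b + 1),
  whose ratio is (b + 1)/(a + 1) = |T_u(v)| / |T_v(u)|.  The sizes |A| = a + 1, |B| = b + 1
  and the positivity of F_A, F_B come from the fact that in an acyclic graph each edge of a
  growing sequence adds exactly one new vertex, and that connected edge sets can be grown.
*)
theory Submission
  imports Defs "HOL-Combinatorics.Multiset_Permutations"
begin

section \<open>Edge sequences growing from a vertex set\<close>

text \<open>For edge sets of a graph, \<open>grows_from {r}\<close> is the local form of the shelling condition: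
  see \<open>rooted_shellings_eq_rooted_orders\<close>.\<close>

fun grows_from :: "'a set \<Rightarrow> 'a set list \<Rightarrow> bool" where
  "grows_from W [] = True"
| "grows_from W (e # s) \<longleftrightarrow> e \<inter> W \<noteq> {} \<and> grows_from (W \<union> e) s"

lemma grows_from_append:
  "grows_from W (s @ t) \<longleftrightarrow> grows_from W s \<and> grows_from (W \<union> \<Union>(set s)) t"
  by (induction s arbitrary: W) (auto simp: Un_assoc)

lemma grows_from_iff_nth:
  "grows_from W s \<longleftrightarrow> (\<forall>k<length s. s ! k \<inter> (W \<union> \<Union>(set (take k s))) \<noteq> {})"
proof (induction s arbitrary: W)
  case (Cons e s)
  then show ?case
    by (simp add: All_less_Suc2 Un_assoc)
qed simp

lemma grows_from_restrict:
  "\<forall>e\<in>set t. e \<subseteq> P \<Longrightarrow> grows_from W t \<longleftrightarrow> grows_from (W \<inter> P) t"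
proof (induction t arbitrary: W)
  case (Cons e t)
  have "(W \<union> e) \<inter> P = W \<inter> P \<union> e" "e \<inter> W \<noteq> {} \<longleftrightarrow> e \<inter> (W \<inter> P) \<noteq> {}"
    using Cons.prems by auto
  then show ?case using Cons.IH[of "W \<union> e"] Cons.prems by simp
qed simp

lemma grows_from_split:
  assumes "v \<in> W" "v \<in> P" "v \<in> Q" "P \<inter> Q \<subseteq> {v}"
    and "\<forall>e\<in>X. e \<subseteq> P" "\<forall>e\<in>Y. e \<subseteq> Q" "X \<inter> Y = {}" "set s \<subseteq> X \<union> Y"
  shows "grows_from W s \<longleftrightarrow>
           grows_from (W \<inter> P) (filter (\<lambda>e. e \<in> X) s) \<and> grows_from (W \<inter> Q) (filter (\<lambda>e. e \<in> Y) s)"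
  using assms
proof (induction s arbitrary: W)
  case (Cons e s)
  have IH: "grows_from (W \<union> e) s \<longleftrightarrow>
      grows_from ((W \<union> e) \<inter> P) (filter (\<lambda>e. e \<in> X) s) \<and>
      grows_from ((W \<union> e) \<inter> Q) (filter (\<lambda>e. e \<in> Y) s)"
    using Cons.prems by (intro Cons.IH) auto
  show ?case
  proof (cases "e \<in> X")
    case True
    then have "e \<notin> Y" "e \<subseteq> P" using Cons.prems(5,7) by blast+
    then have "(W \<union> e) \<inter> P = W \<inter> P \<union> e" "(W \<union> e) \<inter> Q = W \<inter> Q"
      "e \<inter> W \<noteq> {} \<longleftrightarrow> e \<inter> (W \<inter> P) \<noteq> {}"
      using Cons.prems(1,4) by blast+
    then show ?thesis using True \<open>e \<notin> Y\<close> IH by simp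
  next
    case False
    then have "e \<in> Y" "e \<subseteq> Q" using Cons.prems(6,8) by auto
    then have "(W \<union> e) \<inter> Q = W \<inter> Q \<union> e" "(W \<union> e) \<inter> P = W \<inter> P"
      "e \<inter> W \<noteq> {} \<longleftrightarrow> e \<inter> (W \<inter> Q) \<noteq> {}"
      using Cons.prems(1,4) by blast+
    then show ?thesis using False \<open>e \<in> Y\<close> IH by (simp add: conj_ac)
  qed
qed simp

section \<open>Reachability and paths\<close>

lemma adj_sym: "adj E x y \<Longrightarrow> adj E y x"
  by (auto simp: adj_def insert_commute)

lemma adj_mono: "adj H x y \<Longrightarrow> H \<subseteq> G \<Longrightarrow> adj G x y"
  by (auto simp: adj_def)

lemma rtranclp_adj_sym: "(adj E)\<^sup>*\<^sup>* x y \<Longrightarrow> (adj E)\<^sup>*\<^sup>* y x"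
  by (induction rule: rtranclp_induct) (auto intro: converse_rtranclp_into_rtranclp adj_sym)

lemma rtranclp_adj_mono: "(adj H)\<^sup>*\<^sup>* x y \<Longrightarrow> H \<subseteq> G \<Longrightarrow> (adj G)\<^sup>*\<^sup>* x y"
  by (induction rule: rtranclp_induct) (auto intro: rtranclp.rtrancl_into_rtrancl adj_mono)

lemma rtranclp_adj_closed:
  "(adj G)\<^sup>*\<^sup>* x y \<Longrightarrow> x \<in> C \<Longrightarrow> \<forall>f\<in>G. f \<inter> C \<noteq> {} \<longrightarrow> f \<subseteq> C \<Longrightarrow> y \<in> C"
  by (induction rule: rtranclp_induct) (auto simp: adj_def)

lemma rtranclp_adj_Diff:
  assumes "(adj H)\<^sup>*\<^sup>* x y" "x \<in> W" "f \<subseteq> W"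
  shows "\<exists>w\<in>W. (adj (H - {f}))\<^sup>*\<^sup>* w y"
  using assms
proof (induction rule: rtranclp_induct)
  case (step y z)
  then obtain w where w: "w \<in> W" "(adj (H - {f}))\<^sup>*\<^sup>* w y" by blast
  show ?case
  proof (cases "{y, z} = f")
    case True
    then show ?thesis using step.prems by blast
  next
    case False
    then have "adj (H - {f}) y z" using step.hyps(2) by (auto simp: adj_def)
    then show ?thesis using w by (meson rtranclp.rtrancl_into_rtrancl)
  qed
qed blast

lemma is_path_Cons:
  "p \<noteq> [] \<Longrightarrow> is_path E (x # p) \<longleftrightarrow> is_path E p \<and> x \<notin> set p \<and> adj E x (hd p)"
  by (cases p) (auto simp: is_path_def nth_Cons less_Suc_eq_0_disj split: nat.splits)

lemma is_path_drop: "is_path E p \<Longrightarrow> i < length p \<Longrightarrow> is_path E (drop i p)"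
  by (auto simp: is_path_def)

lemma is_path_mono: "is_path H p \<Longrightarrow> H \<subseteq> G \<Longrightarrow> is_path G p"
  by (auto simp: is_path_def adj_def)

lemma is_path_avoiding:
  "is_path E p \<Longrightarrow> v \<notin> set p \<Longrightarrow> is_path (E - {{u, v}}) p"
  unfolding is_path_def adj_def by (auto simp: doubleton_eq_iff dest: nth_mem)

lemma rtranclp_adj_imp_path:
  "(adj E)\<^sup>*\<^sup>* x y \<Longrightarrow> \<exists>p. is_path E p \<and> hd p = x \<and> last p = y"
proof (induction rule: converse_rtranclp_induct)
  case base
  show ?case by (rule exI[of _ "[y]"]) (simp add: is_path_def)
next
  case (step x z)
  then obtain p where p: "is_path E p" "hd p = z" "last p = y" by blast
  have "p \<noteq> []" using p(1) by (simp add: is_path_def)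
  show ?case
  proof (cases "x \<in> set p")
    case True
    then obtain i where i: "i < length p" "p ! i = x" by (meson in_set_conv_nth)
    then have "is_path E (drop i p) \<and> hd (drop i p) = x \<and> last (drop i p) = y"
      using p \<open>p \<noteq> []\<close> by (simp add: is_path_drop hd_drop_conv_nth)
    then show ?thesis by blast
  next
    case False
    then have "is_path E (x # p)" using p step.hyps \<open>p \<noteq> []\<close> by (simp add: is_path_Cons)
    then show ?thesis using p \<open>p \<noteq> []\<close> by (intro exI[of _ "x # p"]) simp
  qed
qed

lemma path_imp_rtranclp_adj: "is_path E p \<Longrightarrow> x \<in> set p \<Longrightarrow> (adj E)\<^sup>*\<^sup>* (hd p) x"
proof (induction p)
  case (Cons a p)
  show ?case
  proof (cases "p = [] \<or> x = a")
    case False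
    then have "is_path E p" "adj E a (hd p)" "x \<in> set p" using Cons.prems by (auto simp: is_path_Cons)
    then show ?thesis using Cons.IH by (simp add: converse_rtranclp_into_rtranclp)
  qed (use Cons.prems in auto)
qed simp

lemma acyclic_edge_not_bypassed:
  assumes acyc: "\<not> has_cycle E" and "H \<subseteq> E" and xy: "{x, y} \<in> E - H" "x \<noteq> y"
  shows "\<not> (adj H)\<^sup>*\<^sup>* x y"
proof
  assume "(adj H)\<^sup>*\<^sup>* x y"
  then obtain p where p: "is_path H p" "hd p = x" "last p = y"
    by (blast dest: rtranclp_adj_imp_path)
  then have "length p \<noteq> 0" by (simp add: is_path_def)
  then consider "length p = 1" | "length p = 2" | "length p \<ge> 3"
    by linarith
  then show False
  proof cases
    case 1
    then obtain a where "p = [a]" by (auto simp: length_Suc_conv)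
    then show False using p xy(2) by simp
  next
    case 2
    then obtain a b where ab: "p = [a, b]" by (auto simp: length_Suc_conv numeral_2_eq_2)
    then have "adj H a b" using p(1) unfolding is_path_def by force
    then show False using ab p xy(1) by (simp add: adj_def)
  next
    case 3
    moreover have "is_path E p" using p(1) \<open>H \<subseteq> E\<close> by (rule is_path_mono)
    moreover have "adj E (last p) (hd p)" using p xy by (simp add: adj_def insert_commute)
    ultimately show False using acyc unfolding has_cycle_def by blast
  qed
qed

section \<open>Shellings as growing edge sequences\<close>

definition doubletons :: "'a set set \<Rightarrow> bool" where
  "doubletons H \<longleftrightarrow> (\<forall>e\<in>H. \<exists>x y. x \<noteq> y \<and> e = {x, y})"

lemma doubletons_subset: "doubletons G \<Longrightarrow> H \<subseteq> G \<Longrightarrow> doubletons H"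
  by (auto simp: doubletons_def)

lemma graph_doubletons: "graph V E \<Longrightarrow> doubletons E"
  unfolding graph_def doubletons_def by blast

lemma graph_finite_edges: "graph V E \<Longrightarrow> finite E"
  by (rule finite_subset[of E "Pow V"]) (auto simp: graph_def)

lemma connected_graph_snoc:
  assumes conn: "connected_graph (\<Union>(set P)) (set P)" and e: "e = {x, y}" "x \<noteq> y"
    and meets: "e \<inter> \<Union>(set P) \<noteq> {}"
  shows "connected_graph (\<Union>(set (P @ [e]))) (set (P @ [e]))"
proof -
  let ?G = "set (P @ [e])"
  obtain z where z: "z \<in> e" "z \<in> \<Union>(set P)" using meets by blast
  have reach: "(adj ?G)\<^sup>*\<^sup>* z w" if "w \<in> \<Union> ?G" for w
  proof (cases "w \<in> \<Union>(set P)")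
    case True
    then have "(adj (set P))\<^sup>*\<^sup>* z w" using conn z(2) unfolding connected_graph_def by blast
    then show ?thesis by (rule rtranclp_adj_mono) auto
  next
    case False
    then have "w \<in> e" using that by auto
    then have "w = z \<or> adj ?G z w" using z(1) e by (auto simp: adj_def insert_commute)
    then show ?thesis by auto
  qed
  show ?thesis unfolding connected_graph_def
    using z reach by (auto intro: rtranclp_trans rtranclp_adj_sym)
qed

lemma grows_from_connected_prefix:
  assumes "doubletons (set s)" "grows_from {r} s" "1 \<le> k" "k \<le> length s"
  shows "connected_graph (\<Union>(set (take k s))) (set (take k s))"
  using assms(3,4)
proof (induction k)
  case (Suc k)
  have k: "k < length s" using Suc.prems by simp
  obtain x y where xy: "x \<noteq> y" "s ! k = {x, y}"
    using assms(1) k unfolding doubletons_def by (meson nth_mem)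
  show ?case
  proof (cases "k = 0")
    case True
    then have "take (Suc k) s = [{x, y}]" using k xy by (cases s) auto
    moreover have "(adj {{x, y}})\<^sup>*\<^sup>* a b" if "a \<in> {x, y}" "b \<in> {x, y}" for a b
      using that xy(1) by (cases "a = b") (auto simp: adj_def insert_commute)
    ultimately show ?thesis unfolding connected_graph_def by auto
  next
    case False
    have conn: "connected_graph (\<Union>(set (take k s))) (set (take k s))" using Suc False by simp
    obtain e t where s: "s = e # t" using k by (cases s) auto
    have "r \<in> e" using assms(2) s by simp
    moreover have "e \<in> set (take k s)" using False s by (cases k) auto
    moreover have "s ! k \<inter> ({r} \<union> \<Union>(set (take k s))) \<noteq> {}"
      using assms(2) k by (simp add: grows_from_iff_nth)
    ultimately have "s ! k \<inter> \<Union>(set (take k s)) \<noteq> {}" by blast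
    then show ?thesis
      using connected_graph_snoc[OF conn xy(2) xy(1)] k by (simp add: take_Suc_conv_app_nth)
  qed
qed simp

lemma shelling_grows_from:
  assumes sh: "is_shelling E s" and dbl: "doubletons E" and r: "s \<noteq> []" "r \<in> hd s"
  shows "grows_from {r} s"
  unfolding grows_from_iff_nth
proof (intro allI impI)
  fix k assume k: "k < length s"
  show "s ! k \<inter> ({r} \<union> \<Union>(set (take k s))) \<noteq> {}"
  proof (cases "k = 0")
    case True
    then show ?thesis using r by (simp add: hd_conv_nth)
  next
    case False
    show ?thesis
    proof
      assume isolated: "s ! k \<inter> ({r} \<union> \<Union>(set (take k s))) = {}"
      let ?G = "set (take (Suc k) s)"
      have G: "?G = insert (s ! k) (set (take k s))" using k by (simp add: take_Suc_conv_app_nth)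
      have conn: "connected_graph (\<Union> ?G) ?G" using sh k unfolding is_shelling_def by auto
      obtain x y where xy: "s ! k = {x, y}"
        using sh dbl k unfolding is_shelling_def doubletons_def by (meson nth_mem)
      have "hd s \<in> ?G" using r(1) by (cases s) auto
      then have "x \<in> \<Union> ?G" "r \<in> \<Union> ?G" using G xy r(2) by auto
      then have "(adj ?G)\<^sup>*\<^sup>* x r" using conn unfolding connected_graph_def by blast
      moreover have "\<forall>f\<in>?G. f \<inter> s ! k \<noteq> {} \<longrightarrow> f \<subseteq> s ! k" using G isolated by auto
      ultimately have "r \<in> s ! k" using rtranclp_adj_closed[of ?G x r "s ! k"] xy by simp
      then show False using isolated by auto
    qed
  qed
qed

text \<open>Unlike \<^const>\<open>rooted_shellings\<close>, this contains the empty ordering when \<open>H = {}\<close>,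
  so a branch without edges contributes the factor 1.\<close>

definition rooted_orders :: "'a set set \<Rightarrow> 'a \<Rightarrow> 'a set list set" where
  "rooted_orders H r = {s \<in> permutations_of_set H. grows_from {r} s}"

lemma finite_rooted_orders: "finite (rooted_orders H r)"
  by (simp add: rooted_orders_def)

lemma rooted_shellings_eq_rooted_orders:
  assumes dbl: "doubletons E" and "E \<noteq> {}"
  shows "rooted_shellings E r = rooted_orders E r"
proof (intro set_eqI iffI)
  fix s assume "s \<in> rooted_shellings E r"
  then show "s \<in> rooted_orders E r"
    using shelling_grows_from[OF _ dbl]
    unfolding rooted_shellings_def rooted_orders_def is_shelling_def permutations_of_set_def by auto
next
  fix s assume s: "s \<in> rooted_orders E r"
  then have "s \<noteq> []" using \<open>E \<noteq> {}\<close> by (auto simp: rooted_orders_def permutations_of_set_def)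
  then have "r \<in> hd s" using s by (cases s) (auto simp: rooted_orders_def)
  moreover have "is_shelling E s"
    using s grows_from_connected_prefix[of s r] dbl
    unfolding is_shelling_def rooted_orders_def permutations_of_set_def by auto
  ultimately show "s \<in> rooted_shellings E r" using \<open>s \<noteq> []\<close> unfolding rooted_shellings_def by auto
qed

section \<open>Counting interleavings\<close>

lemma shuffles_permutations_of_set:
  assumes "X \<inter> Y = {}" "xs \<in> permutations_of_set X" "ys \<in> permutations_of_set Y"
    and s: "s \<in> shuffles xs ys"
  shows "s \<in> permutations_of_set (X \<union> Y)"
    and "filter (\<lambda>e. e \<in> X) s = xs" "filter (\<lambda>e. e \<in> Y) s = ys"
proof -
  have xs: "distinct xs" "set xs = X" and ys: "distinct ys" "set ys = Y"
    using assms(2,3) by (auto simp: permutations_of_set_def)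
  then have disj: "set xs \<inter> set ys = {}" using assms(1) by simp
  show "s \<in> permutations_of_set (X \<union> Y)"
    using distinct_disjoint_shuffles[OF xs(1) ys(1) disj s] set_shuffles[OF s] xs ys
    by (simp add: permutations_of_set_def)
  show "filter (\<lambda>e. e \<in> X) s = xs" using filter_shuffles_disjoint1(1)[OF disj s] xs by simp
  show "filter (\<lambda>e. e \<in> Y) s = ys" using filter_shuffles_disjoint2(1)[OF disj s] ys by simp
qed

lemma card_interleavings:
  assumes XY: "X \<inter> Y = {}"
    and SX: "SX \<subseteq> permutations_of_set X" and SY: "SY \<subseteq> permutations_of_set Y"
  shows "card {s \<in> permutations_of_set (X \<union> Y).
                filter (\<lambda>e. e \<in> X) s \<in> SX \<and> filter (\<lambda>e. e \<in> Y) s \<in> SY}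
       = card SX * card SY * ((card X + card Y) choose card X)"
proof -
  let ?S = "{s \<in> permutations_of_set (X \<union> Y).
              filter (\<lambda>e. e \<in> X) s \<in> SX \<and> filter (\<lambda>e. e \<in> Y) s \<in> SY}"
  have S_eq: "?S = (\<Union>p\<in>SX \<times> SY. shuffles (fst p) (snd p))"
  proof (intro set_eqI iffI)
    fix s assume s: "s \<in> ?S"
    have "filter (\<lambda>e. e \<notin> X) s = filter (\<lambda>e. e \<in> Y) s"
      using s XY by (intro filter_cong) (auto simp: permutations_of_set_def)
    then have "s \<in> shuffles (filter (\<lambda>e. e \<in> X) s) (filter (\<lambda>e. e \<in> Y) s)"
      using partition_in_shuffles[of s "\<lambda>e. e \<in> X"] by simp
    then show "s \<in> (\<Union>p\<in>SX \<times> SY. shuffles (fst p) (snd p))" using s by force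
  next
    fix s assume "s \<in> (\<Union>p\<in>SX \<times> SY. shuffles (fst p) (snd p))"
    then obtain xs ys where "xs \<in> SX" "ys \<in> SY" "s \<in> shuffles xs ys" by auto
    then show "s \<in> ?S" using shuffles_permutations_of_set[OF XY] SX SY by blast
  qed
  have "card ?S = (\<Sum>p\<in>SX \<times> SY. card (shuffles (fst p) (snd p)))"
    unfolding S_eq
  proof (rule card_UN_disjoint)
    show "finite (SX \<times> SY)"
      using finite_subset[OF SX] finite_subset[OF SY] by simp
    show "\<forall>p\<in>SX \<times> SY. \<forall>q\<in>SX \<times> SY. p \<noteq> q \<longrightarrow>
            shuffles (fst p) (snd p) \<inter> shuffles (fst q) (snd q) = {}"
    proof (intro ballI impI equals0I)
      fix p q s assume p: "p \<in> SX \<times> SY" and q: "q \<in> SX \<times> SY" and "p \<noteq> q"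
        and s: "s \<in> shuffles (fst p) (snd p) \<inter> shuffles (fst q) (snd q)"
      have perms: "fst p \<in> permutations_of_set X" "snd p \<in> permutations_of_set Y"
        "fst q \<in> permutations_of_set X" "snd q \<in> permutations_of_set Y"
        using p q SX SY by auto
      have sp: "s \<in> shuffles (fst p) (snd p)" and sq: "s \<in> shuffles (fst q) (snd q)"
        using s by auto
      have "fst p = fst q" "snd p = snd q"
        using shuffles_permutations_of_set(2,3)[OF XY perms(1,2) sp]
          shuffles_permutations_of_set(2,3)[OF XY perms(3,4) sq] by simp_all
      then show False using \<open>p \<noteq> q\<close> by (simp add: prod_eq_iff)
    qed
  qed auto
  also have "\<dots> = (\<Sum>p\<in>SX \<times> SY. (card X + card Y) choose card X)"
  proof (rule sum.cong[OF refl])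
    fix p assume "p \<in> SX \<times> SY"
    then have "fst p \<in> permutations_of_set X" "snd p \<in> permutations_of_set Y" using SX SY by auto
    then have "length (fst p) = card X" "length (snd p) = card Y" "set (fst p) \<inter> set (snd p) = {}"
      using XY by (auto simp: length_finite_permutations_of_set dest: permutations_of_setD)
    then show "card (shuffles (fst p) (snd p)) = (card X + card Y) choose card X"
      by (simp add: card_disjoint_shuffles)
  qed
  finally show ?thesis by (simp add: card_cartesian_product)
qed

section \<open>Growing edge sequences in acyclic graphs\<close>

lemma grows_from_reaches:
  assumes "doubletons (set t)" "grows_from W t" "x \<in> W \<union> \<Union>(set t)"
  shows "\<exists>w\<in>W. (adj (set t))\<^sup>*\<^sup>* w x"
  using assms
proof (induction t arbitrary: x rule: rev_induct)
  case (snoc e t)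
  have grows: "grows_from W t" and meets: "e \<inter> (W \<union> \<Union>(set t)) \<noteq> {}"
    using snoc.prems(2) by (auto simp: grows_from_append)
  have dbl: "doubletons (set t)" using snoc.prems(1) by (auto simp: doubletons_def)
  have mono: "(adj (set t))\<^sup>*\<^sup>* a b \<Longrightarrow> (adj (set (t @ [e])))\<^sup>*\<^sup>* a b" for a b
    by (rule rtranclp_adj_mono) auto
  show ?case
  proof (cases "x \<in> W \<union> \<Union>(set t)")
    case True
    then show ?thesis using snoc.IH[OF dbl grows] mono by blast
  next
    case False
    then have "x \<in> e" using snoc.prems(3) by auto
    obtain z where z: "z \<in> e" "z \<in> W \<union> \<Union>(set t)" using meets by blast
    then obtain w where w: "w \<in> W" "(adj (set t))\<^sup>*\<^sup>* w z" using snoc.IH[OF dbl grows] by blast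
    have "x \<noteq> z" using False z(2) by blast
    moreover obtain a b where "a \<noteq> b" "e = {a, b}" using snoc.prems(1) unfolding doubletons_def by auto
    ultimately have "e = {z, x}" using \<open>x \<in> e\<close> z(1) by auto
    then have "adj (set (t @ [e])) z x" using \<open>x \<noteq> z\<close> by (simp add: adj_def)
    then show ?thesis using w mono by (meson rtranclp.rtrancl_into_rtrancl)
  qed
qed auto

lemma card_grows_from_acyclic:
  assumes acyc: "\<not> has_cycle E" and dbl: "doubletons E"
    and t: "set t \<subseteq> E" "distinct t" "grows_from {r} t"
  shows "card ({r} \<union> \<Union>(set t)) = Suc (length t)"
  using t
proof (induction t rule: rev_induct)
  case (snoc e t)
  let ?U = "{r} \<union> \<Union>(set t)"
  have grows: "grows_from {r} t" and meets: "e \<inter> ?U \<noteq> {}"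
    using snoc.prems(3) by (auto simp: grows_from_append)
  have IH: "card ?U = Suc (length t)" using snoc grows by auto
  have dbl_t: "doubletons (set t)" using dbl snoc.prems(1) by (auto simp: doubletons_def)
  obtain x y where xy: "x \<noteq> y" "e = {x, y}" using dbl snoc.prems(1) unfolding doubletons_def by auto
  have "finite ?U" using dbl_t unfolding doubletons_def by auto
  have not_both: "\<not> (x \<in> ?U \<and> y \<in> ?U)"
  proof
    assume "x \<in> ?U \<and> y \<in> ?U"
    then have "(adj (set t))\<^sup>*\<^sup>* x y"
      using grows_from_reaches[OF dbl_t grows] by (metis singletonD rtranclp_adj_sym rtranclp_trans)
    moreover have "{x, y} \<in> E - set t" using snoc.prems(1,2) xy by auto
    ultimately show False using acyclic_edge_not_bypassed[OF acyc _ _ xy(1)] snoc.prems(1) by auto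
  qed
  obtain z where "z \<notin> ?U" "?U \<union> e = insert z ?U"
    using meets not_both xy(2) by blast
  moreover have "{r} \<union> \<Union>(set (t @ [e])) = ?U \<union> e" by auto
  ultimately show ?case using \<open>finite ?U\<close> IH by simp
qed simp

lemma ex_grows_from:
  assumes "finite H" "doubletons H" "\<forall>x\<in>\<Union>H. \<exists>w\<in>W. (adj H)\<^sup>*\<^sup>* w x"
  shows "\<exists>t\<in>permutations_of_set H. grows_from W t"
  using assms
proof (induction H arbitrary: W rule: finite_psubset_induct)
  case (psubset H)
  show ?case
  proof (cases "H = {}")
    case True
    then show ?thesis by simp
  next
    case False
    then obtain x y where e: "{x, y} \<in> H"
      using psubset.prems(1) unfolding doubletons_def by (metis all_not_in_conv)
    then obtain w where w: "w \<in> W" "(adj H)\<^sup>*\<^sup>* w x" using psubset.prems(2) by blast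
    obtain f where f: "f \<in> H" "f \<inter> W \<noteq> {}"
    proof (cases "w = x")
      case True
      then show ?thesis using that[OF e] w(1) by blast
    next
      case False
      then obtain z where "adj H w z" using w(2) by (metis converse_rtranclpE)
      then show ?thesis using that w(1) unfolding adj_def by blast
    qed
    have "\<exists>w\<in>W \<union> f. (adj (H - {f}))\<^sup>*\<^sup>* w x" if "x \<in> \<Union>(H - {f})" for x
    proof -
      have "x \<in> \<Union>H" using that by blast
      then obtain w where "w \<in> W" and reach: "(adj H)\<^sup>*\<^sup>* w x" using psubset.prems(2) by blast
      then show ?thesis using rtranclp_adj_Diff[OF reach, of "W \<union> f" f] by simp
    qed
    moreover have "H - {f} \<subset> H" "doubletons (H - {f})"
      using f psubset.prems(1) by (auto simp: doubletons_def)
    ultimately obtain t where "t \<in> permutations_of_set (H - {f})" "grows_from (W \<union> f) t"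
      using psubset.IH[of "H - {f}" "W \<union> f"] by blast
    then show ?thesis using f
      by (intro bexI[of _ "f # t"]) (auto simp: permutations_of_set_def)
  qed
qed

section \<open>The two branches at an edge of a tree\<close>

text \<open>\<open>branch E u v\<close> is the vertex set of \<open>T\<^sub>v(u)\<close>: the component of \<open>u\<close> once the edge
  \<open>{u, v}\<close> is deleted.\<close>

definition branch :: "'a set set \<Rightarrow> 'a \<Rightarrow> 'a \<Rightarrow> 'a set" where
  "branch E u v = {x. (adj (E - {{u, v}}))\<^sup>*\<^sup>* u x}"

definition branch_edges :: "'a set set \<Rightarrow> 'a \<Rightarrow> 'a \<Rightarrow> 'a set set" where
  "branch_edges E u v = {e \<in> E - {{u, v}}. e \<subseteq> branch E u v}"

lemma branch_step: "x \<in> branch E u v \<Longrightarrow> adj (E - {{u, v}}) x y \<Longrightarrow> y \<in> branch E u v"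
  unfolding branch_def by (simp add: rtranclp.rtrancl_into_rtrancl)

locale tree_edge =
  fixes V :: "'a set" and E :: "'a set set" and u v :: 'a
  assumes tree: "tree V E" and edge: "{u, v} \<in> E"
begin

lemma swap: "tree_edge V E v u"
  using tree edge by unfold_locales (simp_all add: insert_commute)

lemma graph: "graph V E"
  using tree by (simp add: tree_def)

lemma endpoints: "u \<noteq> v" "u \<in> V" "v \<in> V"
  using graph edge unfolding graph_def by (metis doubleton_eq_iff)+

lemma edges_swap: "E - {{v, u}} = E - {{u, v}}"
  by (simp add: insert_commute)

lemma branch_subset: "branch E u v \<subseteq> V"
proof
  fix x assume "x \<in> branch E u v"
  then have "(adj (E - {{u, v}}))\<^sup>*\<^sup>* u x" by (simp add: branch_def)
  then show "x \<in> V"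
  proof (induction rule: rtranclp_induct)
    case base
    then show ?case using endpoints by simp
  next
    case (step y z)
    then have "{y, z} \<in> E" by (simp add: adj_def)
    then show ?case using graph unfolding graph_def by (metis doubleton_eq_iff)
  qed
qed

lemma v_notin_branch: "v \<notin> branch E u v"
  using acyclic_edge_not_bypassed[of E "E - {{u, v}}" u v] tree edge endpoints(1)
  by (auto simp: tree_def branch_def)

lemma branch_disjoint: "branch E u v \<inter> branch E v u = {}"
proof (rule equals0I)
  fix x assume "x \<in> branch E u v \<inter> branch E v u"
  then have "(adj (E - {{u, v}}))\<^sup>*\<^sup>* u x" "(adj (E - {{u, v}}))\<^sup>*\<^sup>* v x"
    by (simp_all add: branch_def edges_swap)
  then have "v \<in> branch E u v"
    unfolding branch_def by (blast intro: rtranclp_trans rtranclp_adj_sym)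
  then show False using v_notin_branch by blast
qed

lemma branch_Un: "branch E u v \<union> branch E v u = V"
proof
  show "branch E u v \<union> branch E v u \<subseteq> V"
    using branch_subset tree_edge.branch_subset[OF swap] by blast
next
  show "V \<subseteq> branch E u v \<union> branch E v u"
  proof
    fix x assume "x \<in> V"
    then have "(adj E)\<^sup>*\<^sup>* u x" using tree endpoints unfolding tree_def connected_graph_def by blast
    then show "x \<in> branch E u v \<union> branch E v u"
    proof (induction rule: rtranclp_induct)
      case base
      then show ?case by (simp add: branch_def)
    next
      case (step y z)
      show ?case
      proof (cases "{y, z} = {u, v}")
        case True
        then show ?thesis by (auto simp: branch_def doubleton_eq_iff)
      next
        case False
        then have "adj (E - {{u, v}}) y z" "adj (E - {{v, u}}) y z"
          using step.hyps(2) by (auto simp: adj_def insert_commute)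
        then show ?thesis using step.IH branch_step[of y E u v z] branch_step[of y E v u z] by blast
      qed
    qed
  qed
qed

lemma card_branches: "card V = card (branch E u v) + card (branch E v u)"
proof -
  have "finite V" using graph by (simp add: graph_def)
  then have "finite (branch E u v)" "finite (branch E v u)"
    using branch_subset tree_edge.branch_subset[OF swap] by (auto intro: finite_subset)
  then show ?thesis using branch_Un branch_disjoint by (metis card_Un_disjoint)
qed

lemma edges_eq_branch_edges: "E = insert {u, v} (branch_edges E u v \<union> branch_edges E v u)"
proof -
  have "e \<in> branch_edges E u v \<union> branch_edges E v u" if e: "e \<in> E - {{u, v}}" for e
  proof -
    obtain x y where xy: "e = {x, y}" "x \<in> V" "x \<noteq> y"
      using e graph unfolding graph_def by blast
    have step: "adj (E - {{u, v}}) x y" using e xy by (simp add: adj_def)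
    consider "x \<in> branch E u v" | "x \<in> branch E v u" using branch_Un xy(2) by blast
    then show ?thesis
    proof cases
      case 1
      then have "y \<in> branch E u v" using branch_step step by metis
      then show ?thesis using 1 e xy unfolding branch_edges_def by auto
    next
      case 2
      then have "y \<in> branch E v u" using branch_step[of x E v u y] step by (simp add: edges_swap)
      then show ?thesis using 2 e xy unfolding branch_edges_def by (auto simp: edges_swap)
    qed
  qed
  then show ?thesis using edge unfolding branch_edges_def by (auto simp: edges_swap)
qed

lemma branch_edges_disjoint: "branch_edges E u v \<inter> branch_edges E v u = {}"
  using branch_disjoint graph unfolding branch_edges_def graph_def by fastforce

lemma finite_branch_edges: "finite (branch_edges E u v)"
  using graph_finite_edges[OF graph] by (simp add: branch_edges_def)

lemma card_edges: "card E = Suc (card (branch_edges E u v) + card (branch_edges E v u))"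
proof -
  have "{u, v} \<notin> branch_edges E u v \<union> branch_edges E v u"
    by (auto simp: branch_edges_def edges_swap)
  then have "card E = Suc (card (branch_edges E u v \<union> branch_edges E v u))"
    using finite_branch_edges tree_edge.finite_branch_edges[OF swap]
    by (subst edges_eq_branch_edges) simp
  then show ?thesis
    using finite_branch_edges tree_edge.finite_branch_edges[OF swap] branch_edges_disjoint
    by (simp add: card_Un_disjoint)
qed

lemma branch_reachable:
  assumes "x \<in> branch E u v"
  shows "(adj (branch_edges E u v))\<^sup>*\<^sup>* u x"
  using assms unfolding branch_def mem_Collect_eq
proof (induction rule: rtranclp_induct)
  case (step y z)
  then have "y \<in> branch E u v" "z \<in> branch E u v"
    unfolding branch_def by (auto intro: rtranclp.rtrancl_into_rtrancl)
  then have "adj (branch_edges E u v) y z"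
    using step.hyps(2) by (auto simp: adj_def branch_edges_def)
  then show ?case using step.IH by (simp add: rtranclp.rtrancl_into_rtrancl)
qed simp

lemma branch_eq_Union: "branch E u v = insert u (\<Union>(branch_edges E u v))"
proof
  show "insert u (\<Union>(branch_edges E u v)) \<subseteq> branch E u v"
    by (auto simp: branch_def branch_edges_def)
next
  show "branch E u v \<subseteq> insert u (\<Union>(branch_edges E u v))"
  proof
    fix x assume "x \<in> branch E u v"
    then have "(adj (branch_edges E u v))\<^sup>*\<^sup>* u x" by (rule branch_reachable)
    then show "x \<in> insert u (\<Union>(branch_edges E u v))"
      by (cases rule: rtranclp.cases) (auto simp: adj_def)
  qed
qed

lemma ex_rooted_order_branch: "\<exists>t. t \<in> rooted_orders (branch_edges E u v) u"
proof -
  have "doubletons (branch_edges E u v)"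
    using graph_doubletons[OF graph] by (rule doubletons_subset) (auto simp: branch_edges_def)
  moreover have "\<forall>x\<in>\<Union>(branch_edges E u v). \<exists>w\<in>{u}. (adj (branch_edges E u v))\<^sup>*\<^sup>* w x"
    using branch_reachable branch_eq_Union by blast
  ultimately have "\<exists>t\<in>permutations_of_set (branch_edges E u v). grows_from {u} t"
    by (rule ex_grows_from[OF finite_branch_edges])
  then show ?thesis by (auto simp: rooted_orders_def)
qed

lemma card_branch: "card (branch E u v) = Suc (card (branch_edges E u v))"
proof -
  obtain t where t: "t \<in> permutations_of_set (branch_edges E u v)" "grows_from {u} t"
    using ex_rooted_order_branch by (auto simp: rooted_orders_def)
  then have "card ({u} \<union> \<Union>(set t)) = Suc (length t)"
    using card_grows_from_acyclic[OF _ graph_doubletons[OF graph], of t u] tree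
    by (auto simp: tree_def permutations_of_set_def branch_edges_def)
  then show ?thesis
    using t(1) branch_eq_Union by (simp add: length_finite_permutations_of_set permutations_of_set_def)
qed

lemma branch_subset_descendants: "branch E u v \<subseteq> descendants V E v u"
proof
  fix x assume x: "x \<in> branch E u v"
  then obtain p where p: "is_path (E - {{u, v}}) p" "hd p = u" "last p = x"
    unfolding branch_def by (blast dest: rtranclp_adj_imp_path)
  then have "p \<noteq> []" by (simp add: is_path_def)
  have "v \<notin> set p"
    using path_imp_rtranclp_adj[OF p(1)] p(2) v_notin_branch by (auto simp: branch_def)
  moreover have "adj E v (hd p)" using p(2) edge endpoints(1) by (simp add: adj_def insert_commute)
  ultimately have "is_path E (v # p)"
    using is_path_mono[OF p(1)] \<open>p \<noteq> []\<close> by (simp add: is_path_Cons)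
  moreover have "last (v # p) = x" "u \<in> set (v # p)" using p \<open>p \<noteq> []\<close> by auto
  ultimately show "x \<in> descendants V E v u"
    using x branch_subset unfolding descendants_def by force
qed

lemma descendants_subset_branch: "descendants V E v u \<subseteq> branch E u v"
proof
  fix w assume "w \<in> descendants V E v u"
  then obtain p where p: "is_path E p" "hd p = v" "last p = w" "u \<in> set p"
    unfolding descendants_def by blast
  then obtain p' where p': "p = v # p'" by (cases p) (auto simp: is_path_def)
  then have "u \<in> set p'" using p(4) endpoints(1) by auto
  then obtain j where j: "j < length p'" "p' ! j = u" by (meson in_set_conv_nth)
  have "p' \<noteq> []" using \<open>u \<in> set p'\<close> by auto
  then have "is_path E p'" "v \<notin> set p'" using p(1) p' by (simp_all add: is_path_Cons)
  then have path: "is_path (E - {{u, v}}) (drop j p')"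
    using j(1) by (simp add: is_path_avoiding is_path_drop in_set_dropD)
  have "drop j p' \<noteq> []" using j(1) by simp
  then have "last (drop j p') \<in> set (drop j p')" by (rule last_in_set)
  then have "w \<in> set (drop j p')" using j(1) p(3) p' \<open>p' \<noteq> []\<close> by simp
  moreover have "hd (drop j p') = u" using j by (simp add: hd_drop_conv_nth)
  ultimately show "w \<in> branch E u v"
    using path_imp_rtranclp_adj[OF path] by (simp add: branch_def)
qed

lemma descendants_eq_branch: "descendants V E v u = branch E u v"
  using descendants_subset_branch branch_subset_descendants by (rule equalityI)

lemma grows_from_edge_then_branch:
  assumes "set t = branch_edges E u v"
  shows "grows_from ({v} \<union> {u, v}) t \<longleftrightarrow> grows_from {u} t"
proof -
  have "({v} \<union> {u, v}) \<inter> branch E u v = {u}"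
    using v_notin_branch by (auto simp: branch_def)
  then show ?thesis
    using grows_from_restrict[of t "branch E u v" "{v} \<union> {u, v}"] assms
    by (auto simp: branch_edges_def)
qed

lemma rooted_orders_through_edge:
  "rooted_orders (insert {u, v} (branch_edges E u v)) v
     = (#) {u, v} ` rooted_orders (branch_edges E u v) u"
proof (intro set_eqI iffI)
  fix s assume s: "s \<in> rooted_orders (insert {u, v} (branch_edges E u v)) v"
  then obtain f t where ft: "s = f # t"
    by (cases s) (auto simp: rooted_orders_def permutations_of_set_def)
  have "v \<in> f" "f \<in> insert {u, v} (branch_edges E u v)"
    using s ft by (auto simp: rooted_orders_def permutations_of_set_def)
  then have f: "f = {u, v}" using v_notin_branch by (auto simp: branch_edges_def)
  have "insert {u, v} (set t) = insert {u, v} (branch_edges E u v)" "{u, v} \<notin> set t" "distinct t"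
    using s ft f by (auto simp: rooted_orders_def permutations_of_set_def)
  moreover have "{u, v} \<notin> branch_edges E u v" by (simp add: branch_edges_def)
  ultimately have "set t = branch_edges E u v" "distinct t" by (metis insert_ident)+
  then show "s \<in> (#) {u, v} ` rooted_orders (branch_edges E u v) u"
    using s ft f grows_from_edge_then_branch
    by (auto simp: rooted_orders_def permutations_of_set_def)
next
  fix s assume "s \<in> (#) {u, v} ` rooted_orders (branch_edges E u v) u"
  then obtain t where t: "s = {u, v} # t" "t \<in> rooted_orders (branch_edges E u v) u" by blast
  moreover have "{u, v} \<notin> branch_edges E u v" by (simp add: branch_edges_def)
  ultimately show "s \<in> rooted_orders (insert {u, v} (branch_edges E u v)) v"
    using grows_from_edge_then_branch
    by (auto simp: rooted_orders_def permutations_of_set_def)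
qed

lemma rooted_orders_split:
  assumes "s \<in> permutations_of_set E"
  shows "s \<in> rooted_orders E v \<longleftrightarrow>
           filter (\<lambda>e. e \<in> insert {u, v} (branch_edges E u v)) s
             \<in> rooted_orders (insert {u, v} (branch_edges E u v)) v \<and>
           filter (\<lambda>e. e \<in> branch_edges E v u) s \<in> rooted_orders (branch_edges E v u) v"
proof -
  let ?X = "insert {u, v} (branch_edges E u v)" and ?Y = "branch_edges E v u"
  have u: "u \<in> branch E u v" and v: "v \<in> branch E v u" by (simp_all add: branch_def)
  have XY: "?X \<inter> ?Y = {}" "E = ?X \<union> ?Y"
    using branch_edges_disjoint edges_eq_branch_edges by (auto simp: branch_edges_def edges_swap)
  have "grows_from {v} s \<longleftrightarrow>
          grows_from ({v} \<inter> insert v (branch E u v)) (filter (\<lambda>e. e \<in> ?X) s) \<and>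
          grows_from ({v} \<inter> branch E v u) (filter (\<lambda>e. e \<in> ?Y) s)"
  proof (rule grows_from_split)
    show "insert v (branch E u v) \<inter> branch E v u \<subseteq> {v}" using branch_disjoint by blast
    show "\<forall>e\<in>?X. e \<subseteq> insert v (branch E u v)" using u by (auto simp: branch_edges_def)
    show "\<forall>e\<in>?Y. e \<subseteq> branch E v u" by (auto simp: branch_edges_def)
    show "set s \<subseteq> ?X \<union> ?Y" using assms XY(2) by (simp add: permutations_of_set_def)
  qed (use XY(1) v in auto)
  moreover have "{v} \<inter> insert v (branch E u v) = {v}" "{v} \<inter> branch E v u = {v}" using v by auto
  moreover have "filter (\<lambda>e. e \<in> ?X) s \<in> permutations_of_set ?X"
    "filter (\<lambda>e. e \<in> ?Y) s \<in> permutations_of_set ?Y"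
    using assms XY(2) by (auto simp: permutations_of_set_def)
  ultimately show ?thesis using assms by (simp add: rooted_orders_def)
qed

lemma card_rooted_orders:
  "card (rooted_orders E v) =
     card (rooted_orders (branch_edges E u v) u) * card (rooted_orders (branch_edges E v u) v)
     * (card E choose Suc (card (branch_edges E u v)))"
proof -
  let ?X = "insert {u, v} (branch_edges E u v)" and ?Y = "branch_edges E v u"
  have XY: "?X \<inter> ?Y = {}" "E = ?X \<union> ?Y"
    using branch_edges_disjoint edges_eq_branch_edges by (auto simp: branch_edges_def edges_swap)
  have card_X: "card ?X = Suc (card (branch_edges E u v))"
    using finite_branch_edges by (simp add: branch_edges_def)
  have "rooted_orders E v =
          {s \<in> permutations_of_set (?X \<union> ?Y).
             filter (\<lambda>e. e \<in> ?X) s \<in> rooted_orders ?X v \<and>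
             filter (\<lambda>e. e \<in> ?Y) s \<in> rooted_orders ?Y v}"
    using rooted_orders_split XY(2) by (auto simp: rooted_orders_def)
  also have "card \<dots> = card (rooted_orders ?X v) * card (rooted_orders ?Y v) * (card E choose card ?X)"
    by (subst card_interleavings) (use XY in \<open>auto simp: rooted_orders_def card_edges card_X\<close>)
  also have "card (rooted_orders ?X v) = card (rooted_orders (branch_edges E u v) u)"
    by (simp add: rooted_orders_through_edge card_image)
  finally show ?thesis by (simp add: card_X)
qed

lemma F_factorization:
  "F E v = card (rooted_orders (branch_edges E u v) u) * card (rooted_orders (branch_edges E v u) v)
             * (card E choose Suc (card (branch_edges E u v)))"
proof -
  have "E \<noteq> {}" using edge by blast
  then show ?thesis
    using rooted_shellings_eq_rooted_orders[OF graph_doubletons[OF graph]] card_rooted_orders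
    by (simp add: F_def)
qed

end

theorem corollary3p5:
  fixes V :: "'a set" and E :: "'a set set" and u v :: 'a and n :: nat
  assumes "tree V E"
    and "card V = n" and "n \<ge> 2"
    and "{u, v} \<in> E"
  shows "real (F E v) / real (F E u)
           = real (subtree_size V E u v) / real (subtree_size V E v u)
       \<and> real (subtree_size V E u v) / real (subtree_size V E v u)
           = real (subtree_size V E u v) / (real n - real (subtree_size V E u v))"
proof -
  interpret uv: tree_edge V E u v using assms(1,4) by unfold_locales
  interpret vu: tree_edge V E v u by (rule uv.swap)
  define a where "a = card (branch_edges E u v)"
  define b where "b = card (branch_edges E v u)"
  define c where
    "c = card (rooted_orders (branch_edges E u v) u) * card (rooted_orders (branch_edges E v u) v)"
  have "c > 0"
    using uv.ex_rooted_order_branch vu.ex_rooted_order_branch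
    by (auto simp: c_def card_gt_0_iff finite_rooted_orders)
  have F: "F E v = c * (Suc (a + b) choose Suc a)" "F E u = c * (Suc (a + b) choose Suc b)"
    using uv.F_factorization vu.F_factorization uv.card_edges by (simp_all add: a_def b_def c_def)
  have sizes: "subtree_size V E v u = Suc a" "subtree_size V E u v = Suc b"
    using uv.descendants_eq_branch vu.descendants_eq_branch uv.card_branch vu.card_branch
    by (simp_all add: subtree_size_def a_def b_def)
  have "n = Suc a + Suc b"
    using assms(2) uv.card_branches uv.card_branch vu.card_branch
    by (simp add: a_def b_def)
  moreover have "F E v * Suc a = F E u * Suc b"
    using Suc_times_binomial_add[of a b] binomial_symmetric[of "Suc b" "Suc (a + b)"]
    by (simp add: F ac_simps)
  moreover have "F E u > 0" using \<open>c > 0\<close> by (simp add: F)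
  ultimately show ?thesis unfolding sizes by (simp add: field_simps flip: of_nat_mult)
qed

end
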